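(* Let $(E,p,X)$ be an étalé space with $X$ a Boolean space. Let $X^{\ast}$ be the Boolean algebra of compact-open subsets of $X$ (under inclusion) and $E^{\ast}$ the set of compact-open local sections of $E$. Let $\widetilde p\colon E^{\ast}\to X^{\ast}$ be $C\mapsto p(C)$, and for compact-open $A\supseteq B$ in $X$ and $C\in E^{\ast}$ with $p(C)=A$ define $C|^A_B=C\cap p^{-1}(B)$. Then $\widetilde p\colon E^{\ast}\to X^{\ast}$ is a Boolean set.
   Context: A Boolean space is a Hausdorff space with a basis of compact-open sets. An étalé space $(E,p,X)$: topological spaces with a surjective local homeomorphism $p\colon E\to X$. A (open) local section is an open $A\subseteq E$ with $p|_A$ injective. Convention: a "Boolean algebra" means a generalized Boolean algebra (relatively complemented distributive lattice with $0$). Presheaf of sets over a meet semilattice $E$: pairwise disjoint sets $X_e$, restriction maps $x\mapsto x|^e_f$ for $e\ge f$ with $|^e_e=\mathrm{id}$ and $(x|^e_f)|^f_g=x|^e_g$; $p(x)=e$ iff $x\in X_e$; global support: all $X_e\neq\emptyset$. Order: $x\le y$ iff $p(x)\le p(y)$ and $x=y|^{p(y)}_{p(x)}$. Compatibility $x\sim y$: $x\wedge y$ exists and $p(x\wedge y)=p(x)\wedge p(y)$. A Boolean set is a presheaf with global support over a Boolean algebra such that the order has least element $0$, compatible pairs have joins, and $p(x)=0\Rightarrow x=0$. *)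

theory Defs
  imports "HOL-Analysis.Analysis"
begin

definition boolean_space :: "'a topology \<Rightarrow> bool" where
  "boolean_space X \<longleftrightarrow> Hausdorff_space X \<and>
     (\<forall>U x. openin X U \<and> x \<in> U \<longrightarrow>
        (\<exists>V. openin X V \<and> compactin X V \<and> x \<in> V \<and> V \<subseteq> U))"

definition local_homeomorphism_map :: "'a topology \<Rightarrow> 'b topology \<Rightarrow> ('a \<Rightarrow> 'b) \<Rightarrow> bool" where
  "local_homeomorphism_map E X p \<longleftrightarrow> continuous_map E X p \<and>
     (\<forall>x\<in>topspace E. \<exists>U. openin E U \<and> x \<in> U \<and> openin X (p ` U) \<and>
        homeomorphic_map (subtopology E U) (subtopology X (p ` U)) p)"

definition etale_space :: "'a topology \<Rightarrow> ('a \<Rightarrow> 'b) \<Rightarrow> 'b topology \<Rightarrow> bool" where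
  "etale_space E p X \<longleftrightarrow> local_homeomorphism_map E X p \<and> p ` topspace E = topspace X"

definition local_section :: "'a topology \<Rightarrow> ('a \<Rightarrow> 'b) \<Rightarrow> 'a set \<Rightarrow> bool" where
  "local_section E p A \<longleftrightarrow> openin E A \<and> inj_on p A"

definition compact_open :: "'a topology \<Rightarrow> 'a set \<Rightarrow> bool" where
  "compact_open X A \<longleftrightarrow> openin X A \<and> compactin X A"

definition is_inf :: "('a \<Rightarrow> 'a \<Rightarrow> bool) \<Rightarrow> 'a set \<Rightarrow> 'a \<Rightarrow> 'a \<Rightarrow> 'a \<Rightarrow> bool" where
  "is_inf le A a b m \<longleftrightarrow> m \<in> A \<and> le m a \<and> le m b \<and> (\<forall>z\<in>A. le z a \<and> le z b \<longrightarrow> le z m)"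

definition is_sup :: "('a \<Rightarrow> 'a \<Rightarrow> bool) \<Rightarrow> 'a set \<Rightarrow> 'a \<Rightarrow> 'a \<Rightarrow> 'a \<Rightarrow> bool" where
  "is_sup le A a b j \<longleftrightarrow> j \<in> A \<and> le a j \<and> le b j \<and> (\<forall>z\<in>A. le a z \<and> le b z \<longrightarrow> le j z)"

definition binf :: "('a \<Rightarrow> 'a \<Rightarrow> bool) \<Rightarrow> 'a set \<Rightarrow> 'a \<Rightarrow> 'a \<Rightarrow> 'a" where
  "binf le A a b = (THE m. is_inf le A a b m)"

definition bsup :: "('a \<Rightarrow> 'a \<Rightarrow> bool) \<Rightarrow> 'a set \<Rightarrow> 'a \<Rightarrow> 'a \<Rightarrow> 'a" where
  "bsup le A a b = (THE j. is_sup le A a b j)"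

definition bbot :: "('a \<Rightarrow> 'a \<Rightarrow> bool) \<Rightarrow> 'a set \<Rightarrow> 'a" where
  "bbot le A = (THE z. z \<in> A \<and> (\<forall>a\<in>A. le z a))"

definition partial_order_on_set :: "('a \<Rightarrow> 'a \<Rightarrow> bool) \<Rightarrow> 'a set \<Rightarrow> bool" where
  "partial_order_on_set le A \<longleftrightarrow>
     (\<forall>a\<in>A. le a a) \<and>
     (\<forall>a\<in>A. \<forall>b\<in>A. le a b \<and> le b a \<longrightarrow> a = b) \<and>
     (\<forall>a\<in>A. \<forall>b\<in>A. \<forall>c\<in>A. le a b \<and> le b c \<longrightarrow> le a c)"

definition meet_semilattice :: "('a \<Rightarrow> 'a \<Rightarrow> bool) \<Rightarrow> 'a set \<Rightarrow> bool" where
  "meet_semilattice le A \<longleftrightarrow> partial_order_on_set le A \<and>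
     (\<forall>a\<in>A. \<forall>b\<in>A. \<exists>m. is_inf le A a b m)"

definition gen_boolean_algebra :: "('a \<Rightarrow> 'a \<Rightarrow> bool) \<Rightarrow> 'a set \<Rightarrow> bool" where
  "gen_boolean_algebra le A \<longleftrightarrow> partial_order_on_set le A \<and>
     (\<forall>a\<in>A. \<forall>b\<in>A. \<exists>m. is_inf le A a b m) \<and>
     (\<forall>a\<in>A. \<forall>b\<in>A. \<exists>j. is_sup le A a b j) \<and>
     (\<exists>z\<in>A. \<forall>a\<in>A. le z a) \<and>
     (\<forall>a\<in>A. \<forall>b\<in>A. \<forall>c\<in>A.
        binf le A a (bsup le A b c) = bsup le A (binf le A a b) (binf le A a c)) \<and>
     (\<forall>a\<in>A. \<forall>x\<in>A. \<forall>b\<in>A. le a x \<and> le x b \<longrightarrow>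
        (\<exists>y\<in>A. binf le A x y = a \<and> bsup le A x y = b))"

text \<open>A presheaf of sets over the meet semilattice (B, le) is given by the total set S
  (the disjoint union of the fibres X_e = {x \<in> S. p x = e}), the projection p and the
  restriction maps res e f :: X_e \<Rightarrow> X_f for e \<ge> f.\<close>
definition presheaf :: "('b \<Rightarrow> 'b \<Rightarrow> bool) \<Rightarrow> 'b set \<Rightarrow> 'a set \<Rightarrow> ('a \<Rightarrow> 'b)
     \<Rightarrow> ('b \<Rightarrow> 'b \<Rightarrow> 'a \<Rightarrow> 'a) \<Rightarrow> bool" where
  "presheaf le B S p res \<longleftrightarrow> meet_semilattice le B \<and>
     (\<forall>x\<in>S. p x \<in> B) \<and>
     (\<forall>e\<in>B. \<forall>f\<in>B. \<forall>x\<in>S. le f e \<and> p x = e \<longrightarrow> res e f x \<in> S \<and> p (res e f x) = f) \<and>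
     (\<forall>x\<in>S. res (p x) (p x) x = x) \<and>
     (\<forall>e\<in>B. \<forall>f\<in>B. \<forall>g\<in>B. \<forall>x\<in>S. le g f \<and> le f e \<and> p x = e \<longrightarrow>
        res f g (res e f x) = res e g x)"

definition global_support :: "'b set \<Rightarrow> 'a set \<Rightarrow> ('a \<Rightarrow> 'b) \<Rightarrow> bool" where
  "global_support B S p \<longleftrightarrow> (\<forall>e\<in>B. \<exists>x\<in>S. p x = e)"

definition presheaf_le :: "('b \<Rightarrow> 'b \<Rightarrow> bool) \<Rightarrow> ('a \<Rightarrow> 'b) \<Rightarrow> ('b \<Rightarrow> 'b \<Rightarrow> 'a \<Rightarrow> 'a)
     \<Rightarrow> 'a \<Rightarrow> 'a \<Rightarrow> bool" where
  "presheaf_le le p res x y \<longleftrightarrow> le (p x) (p y) \<and> x = res (p y) (p x) y"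

definition presheaf_compatible :: "('b \<Rightarrow> 'b \<Rightarrow> bool) \<Rightarrow> 'b set \<Rightarrow> 'a set \<Rightarrow> ('a \<Rightarrow> 'b)
     \<Rightarrow> ('b \<Rightarrow> 'b \<Rightarrow> 'a \<Rightarrow> 'a) \<Rightarrow> 'a \<Rightarrow> 'a \<Rightarrow> bool" where
  "presheaf_compatible le B S p res x y \<longleftrightarrow>
     (\<exists>m. is_inf (presheaf_le le p res) S x y m \<and> p m = binf le B (p x) (p y))"

definition boolean_set :: "('b \<Rightarrow> 'b \<Rightarrow> bool) \<Rightarrow> 'b set \<Rightarrow> 'a set \<Rightarrow> ('a \<Rightarrow> 'b)
     \<Rightarrow> ('b \<Rightarrow> 'b \<Rightarrow> 'a \<Rightarrow> 'a) \<Rightarrow> bool" where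
  "boolean_set le B S p res \<longleftrightarrow>
     gen_boolean_algebra le B \<and> presheaf le B S p res \<and> global_support B S p \<and>
     (\<exists>z\<in>S. (\<forall>x\<in>S. presheaf_le le p res z x) \<and>
            (\<forall>x\<in>S. p x = bbot le B \<longrightarrow> x = z)) \<and>
     (\<forall>x\<in>S. \<forall>y\<in>S. presheaf_compatible le B S p res x y \<longrightarrow>
        (\<exists>j. is_sup (presheaf_le le p res) S x y j))"

end

theory Submission
  imports Defs
begin

text \<open>The compact-open subsets of a Hausdorff space form a ring of sets, hence a generalized
  Boolean algebra under inclusion with intersection, union and difference. Compact-open
  local sections are open sets on which \<open>p\<close> is a homeomorphism, so they restrict along
  compact-open subsets of the base, and every compact-open subset of a Boolean base is covered
  by finitely many images of such sections; cutting them down to disjoint images and taking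
  the union shows it is itself the image of one (global support). The presheaf order on sections
  turns out to be plain inclusion, and two compatible sections agree over the overlap of their
  images, so their union is again a local section and is their join.\<close>

context ring_of_sets
begin

lemma binf_eq_Int:
  assumes "a \<in> M" "b \<in> M" shows "binf (\<subseteq>) M a b = a \<inter> b"
  unfolding binf_def
proof (rule the_equality)
  have "a \<inter> b \<in> M" using assms by blast
  then show "is_inf (\<subseteq>) M a b (a \<inter> b)" unfolding is_inf_def by blast
  fix m assume "is_inf (\<subseteq>) M a b m"
  with \<open>a \<inter> b \<in> M\<close> show "m = a \<inter> b" unfolding is_inf_def by blast
qed

lemma bsup_eq_Un:
  assumes "a \<in> M" "b \<in> M" shows "bsup (\<subseteq>) M a b = a \<union> b"
  unfolding bsup_def
proof (rule the_equality)
  have "a \<union> b \<in> M" using assms by blast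
  then show "is_sup (\<subseteq>) M a b (a \<union> b)" unfolding is_sup_def by blast
  fix j assume "is_sup (\<subseteq>) M a b j"
  with \<open>a \<union> b \<in> M\<close> show "j = a \<union> b" unfolding is_sup_def by blast
qed

lemma bbot_eq_empty: "bbot (\<subseteq>) M = {}"
  unfolding bbot_def by (rule the_equality) auto

lemma meet_semilattice_subset: "meet_semilattice (\<subseteq>) M"
  unfolding meet_semilattice_def partial_order_on_set_def is_inf_def by blast

lemma gen_boolean_algebra_subset: "gen_boolean_algebra (\<subseteq>) M"
  unfolding gen_boolean_algebra_def
proof (intro conjI)
  show "partial_order_on_set (\<subseteq>) M" "\<forall>a\<in>M. \<forall>b\<in>M. \<exists>m. is_inf (\<subseteq>) M a b m"
    using meet_semilattice_subset unfolding meet_semilattice_def by blast+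
  show "\<forall>a\<in>M. \<forall>b\<in>M. \<exists>j. is_sup (\<subseteq>) M a b j"
    unfolding is_sup_def by blast
  show "\<exists>z\<in>M. \<forall>a\<in>M. z \<subseteq> a" by blast
  show "\<forall>a\<in>M. \<forall>b\<in>M. \<forall>c\<in>M.
      binf (\<subseteq>) M a (bsup (\<subseteq>) M b c) = bsup (\<subseteq>) M (binf (\<subseteq>) M a b) (binf (\<subseteq>) M a c)"
    by (simp add: binf_eq_Int bsup_eq_Un Int Un Int_Un_distrib)
  show "\<forall>a\<in>M. \<forall>x\<in>M. \<forall>b\<in>M. a \<subseteq> x \<and> x \<subseteq> b \<longrightarrow>
      (\<exists>y\<in>M. binf (\<subseteq>) M x y = a \<and> bsup (\<subseteq>) M x y = b)"
  proof (intro ballI impI)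
    fix a x b assume "a \<in> M" "x \<in> M" "b \<in> M" "a \<subseteq> x \<and> x \<subseteq> b"
    moreover have "a \<union> (b - x) \<in> M" using \<open>a \<in> M\<close> \<open>x \<in> M\<close> \<open>b \<in> M\<close> by blast
    ultimately show "\<exists>y\<in>M. binf (\<subseteq>) M x y = a \<and> bsup (\<subseteq>) M x y = b"
      by (intro bexI[of _ "a \<union> (b - x)"]) (auto simp: binf_eq_Int bsup_eq_Un)
  qed
qed

end

lemma ring_of_sets_compact_open:
  assumes "Hausdorff_space X"
  shows "ring_of_sets (topspace X) {A. compact_open X A}"
proof (rule ring_of_setsI)
  fix A B assume A: "A \<in> {A. compact_open X A}" and B: "B \<in> {A. compact_open X A}"
  then show "A \<union> B \<in> {A. compact_open X A}"
    unfolding compact_open_def by (simp add: compactin_Un openin_Un)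
  have "closedin X B" "closedin X (topspace X - B)"
    using assms B compactin_imp_closedin unfolding compact_open_def by auto
  moreover have "A - B = (topspace X - B) \<inter> A"
    using A openin_subset unfolding compact_open_def by blast
  ultimately show "A - B \<in> {A. compact_open X A}"
    using A closed_Int_compactin unfolding compact_open_def by auto
qed (auto simp: compact_open_def dest: openin_subset)

lemma inj_on_Un_if_agree_on_overlap:
  assumes A: "inj_on f A" and B: "inj_on f B" and CA: "C \<subseteq> A" and CB: "C \<subseteq> B"
    and overlap: "f ` A \<inter> f ` B \<subseteq> f ` C"
  shows "inj_on f (A \<union> B)"
  unfolding inj_on_Un
proof (intro conjI A B equals0I)
  fix y assume "y \<in> f ` (A - B) \<inter> f ` (B - A)"
  then obtain a b where a: "a \<in> A - B" "y = f a" and b: "b \<in> B - A" "y = f b"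
    by (elim IntE imageE)
  then have "y \<in> f ` C" using overlap by blast
  then obtain c where c: "c \<in> C" "y = f c" by (rule imageE)
  have "a = c" using inj_onD[OF A] a c CA by auto
  moreover have "b = c" using inj_onD[OF B] b c CB by auto
  ultimately show False using a b by simp
qed

lemma etale_space_continuous_map: "etale_space E p X \<Longrightarrow> continuous_map E X p"
  unfolding etale_space_def local_homeomorphism_map_def by blast

lemma etale_space_openin_image:
  assumes "etale_space E p X" "openin E C"
  shows "openin X (p ` C)"
proof (subst openin_subopen, intro ballI)
  fix y assume "y \<in> p ` C"
  then obtain e where e: "e \<in> C" "y = p e" by auto
  then have "e \<in> topspace E" using assms(2) openin_subset by blast
  then obtain U where U: "openin E U" "e \<in> U" "openin X (p ` U)"
     "homeomorphic_map (subtopology E U) (subtopology X (p ` U)) p"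
    using assms(1) unfolding etale_space_def local_homeomorphism_map_def by blast
  have "C \<inter> U \<subseteq> topspace (subtopology E U)"
    using assms(2) openin_subset by fastforce
  moreover have "openin (subtopology E U) (C \<inter> U)"
    using assms(2) by (auto simp: openin_subtopology)
  ultimately have "openin (subtopology X (p ` U)) (p ` (C \<inter> U))"
    using homeomorphic_map_openness[OF U(4)] by simp
  then have "openin X (p ` (C \<inter> U))"
    using U(3) openin_open_subtopology by blast
  then show "\<exists>T. openin X T \<and> y \<in> T \<and> T \<subseteq> p ` C"
    using e U(2) by blast
qed

lemma etale_space_compact_open_image:
  assumes "etale_space E p X" "compact_open E C"
  shows "compact_open X (p ` C)"
proof -
  have "openin E C" "compactin E C" using assms(2) unfolding compact_open_def by auto
  then show ?thesis
    unfolding compact_open_def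
    using etale_space_openin_image[OF assms(1)]
      image_compactin[OF _ etale_space_continuous_map[OF assms(1)]] by simp
qed

lemma image_section_restrict:
  "C \<subseteq> topspace E \<Longrightarrow> p ` (C \<inter> (p -` D \<inter> topspace E)) = p ` C \<inter> D"
  by auto

lemma compact_open_section_restrict:
  assumes hX: "Hausdorff_space X" and cont: "continuous_map E X p"
    and C: "compact_open E C" "local_section E p C" and D: "compact_open X D"
  shows "compact_open E (C \<inter> (p -` D \<inter> topspace E))"
    and "local_section E p (C \<inter> (p -` D \<inter> topspace E))"
proof -
  have eq: "C \<inter> (p -` D \<inter> topspace E) = C \<inter> {x \<in> topspace E. p x \<in> D}" by blast
  have "openin X D" "closedin X D"
    using D compactin_imp_closedin[OF hX] unfolding compact_open_def by auto
  then have "openin E {x \<in> topspace E. p x \<in> D}" "closedin E {x \<in> topspace E. p x \<in> D}"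
    using openin_continuous_map_preimage[OF cont] closedin_continuous_map_preimage[OF cont]
    by auto
  moreover have "openin E C" "compactin E C" "inj_on p C"
    using C unfolding compact_open_def local_section_def by auto
  ultimately show "compact_open E (C \<inter> (p -` D \<inter> topspace E))"
    "local_section E p (C \<inter> (p -` D \<inter> topspace E))"
    unfolding eq compact_open_def local_section_def
    by (auto intro: compact_Int_closedin inj_on_subset)
qed

lemma compact_open_section_image_near:
  assumes et: "etale_space E p X" and "boolean_space X"
    and A: "compact_open X A" and x: "x \<in> A"
  obtains C where "compact_open E C" "local_section E p C" "x \<in> p ` C" "p ` C \<subseteq> A"
proof -
  have "x \<in> topspace X" using A x openin_subset unfolding compact_open_def by blast
  then obtain e where "e \<in> topspace E" "p e = x"
    using et unfolding etale_space_def by force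
  then obtain U where U: "openin E U" "e \<in> U" "openin X (p ` U)"
     "homeomorphic_map (subtopology E U) (subtopology X (p ` U)) p"
    using et unfolding etale_space_def local_homeomorphism_map_def by blast
  have "openin X (p ` U \<inter> A)" "x \<in> p ` U \<inter> A"
    using U A \<open>p e = x\<close> x unfolding compact_open_def by auto
  then obtain V where V: "openin X V" "compactin X V" "x \<in> V" "V \<subseteq> p ` U \<inter> A"
    using \<open>boolean_space X\<close> unfolding boolean_space_def by blast
  define W where "W = U \<inter> (p -` V \<inter> topspace E)"
  have UE: "U \<subseteq> topspace E" using U(1) openin_subset by blast
  have pW: "p ` W = V" unfolding W_def image_section_restrict[OF UE] using V(4) by blast
  have "compactin (subtopology X (p ` U)) (p ` W)"
    using pW V by (auto simp: compactin_subtopology)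
  moreover have "W \<subseteq> topspace (subtopology E U)" unfolding W_def by auto
  ultimately have "compactin (subtopology E U) W"
    using homeomorphic_map_compactness[OF U(4)] by blast
  then have "compactin E W" by (simp add: compactin_subtopology)
  moreover have "openin E W"
  proof -
    have "openin E {x \<in> topspace E. p x \<in> V}"
      using V(1) etale_space_continuous_map[OF et] openin_continuous_map_preimage by blast
    moreover have "W = U \<inter> {x \<in> topspace E. p x \<in> V}" unfolding W_def by auto
    ultimately show ?thesis using U(1) by auto
  qed
  moreover have "inj_on p W"
    using homeomorphic_imp_injective_map[OF U(4)] by (auto simp: W_def intro: inj_on_subset)
  ultimately show thesis
    using that[of W] pW V unfolding compact_open_def local_section_def by blast
qed

definition section_images :: "'a topology \<Rightarrow> ('a \<Rightarrow> 'b) \<Rightarrow> 'b set set" where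
  "section_images E p = (\<lambda>C. p ` C) ` {C. compact_open E C \<and> local_section E p C}"

lemma section_images_empty: "{} \<in> section_images E p"
proof -
  have "compact_open E {} \<and> local_section E p {}"
    unfolding compact_open_def local_section_def by simp
  then show ?thesis unfolding section_images_def by force
qed

lemma section_images_Un:
  assumes et: "etale_space E p X" and hX: "Hausdorff_space X"
    and V: "V \<in> section_images E p" and W: "W \<in> section_images E p"
  shows "V \<union> W \<in> section_images E p"
proof -
  interpret ring_of_sets "topspace X" "{A. compact_open X A}"
    using ring_of_sets_compact_open[OF hX] .
  obtain C1 C2 where C1: "compact_open E C1" "local_section E p C1" "V = p ` C1"
    and C2: "compact_open E C2" "local_section E p C2" "W = p ` C2"
    using V W unfolding section_images_def by blast
  define C2' where "C2' = C2 \<inter> (p -` (W - V) \<inter> topspace E)"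
  have "compact_open X (W - V)"
    using Diff etale_space_compact_open_image[OF et] C1(1,3) C2(1,3) by simp
  then have C2': "compact_open E C2'" "local_section E p C2'"
    unfolding C2'_def
    using compact_open_section_restrict[OF hX etale_space_continuous_map[OF et] C2(1,2)] by auto
  have "C2 \<subseteq> topspace E" using C2(1) openin_subset unfolding compact_open_def by blast
  then have pC2': "p ` C2' = W - V"
    unfolding C2'_def C2(3) by (simp add: image_section_restrict Int_absorb1)
  then have image_Un: "p ` (C1 \<union> C2') = V \<union> W" using C1(3) by auto
  have "p ` C1 \<inter> p ` C2' = {}" using pC2' C1(3) by simp
  then have "p ` (C1 - C2') \<inter> p ` (C2' - C1) = {}"
    by (metis Diff_subset image_mono inf_mono subset_empty)
  then have "local_section E p (C1 \<union> C2')"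
    using C1(2) C2'(2) unfolding local_section_def inj_on_Un by (simp add: openin_Un)
  moreover have "compact_open E (C1 \<union> C2')"
    using C1(1) C2'(1) unfolding compact_open_def by (simp add: compactin_Un openin_Un)
  ultimately show ?thesis
    using image_Un unfolding section_images_def by (metis (mono_tags, lifting) image_eqI mem_Collect_eq)
qed

lemma finite_Union_section_images:
  assumes "etale_space E p X" "Hausdorff_space X" "finite \<F>" "\<F> \<subseteq> section_images E p"
  shows "\<Union>\<F> \<in> section_images E p"
  using assms(3,4)
  by (induction rule: finite_induct) (simp_all add: section_images_empty section_images_Un[OF assms(1,2)])

lemma compact_open_in_section_images:
  assumes et: "etale_space E p X" and bX: "boolean_space X" and A: "compact_open X A"
  shows "A \<in> section_images E p"
proof -
  define \<U> where "\<U> = {V \<in> section_images E p. V \<subseteq> A}"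
  have "A \<subseteq> \<Union>\<U>"
  proof
    fix x assume "x \<in> A"
    then obtain C where "compact_open E C" "local_section E p C" "x \<in> p ` C" "p ` C \<subseteq> A"
      by (rule compact_open_section_image_near[OF et bX A])
    then have "p ` C \<in> \<U>" "x \<in> p ` C" unfolding \<U>_def section_images_def by blast+
    then show "x \<in> \<Union>\<U>" by blast
  qed
  moreover have "\<forall>V\<in>\<U>. openin X V"
    using etale_space_compact_open_image[OF et]
    unfolding \<U>_def section_images_def compact_open_def by blast
  ultimately obtain \<F> where \<F>: "finite \<F>" "\<F> \<subseteq> \<U>" "A \<subseteq> \<Union>\<F>"
    using compactinD[of X A \<U>] A unfolding compact_open_def by blast
  have "Hausdorff_space X" using bX unfolding boolean_space_def by blast
  then have "\<Union>\<F> \<in> section_images E p"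
    using finite_Union_section_images[OF et] \<F> unfolding \<U>_def by blast
  moreover have "A = \<Union>\<F>" using \<F> unfolding \<U>_def by blast
  ultimately show ?thesis by simp
qed

lemma presheaf_le_local_section_iff_subset:
  assumes "local_section E p y"
  shows "presheaf_le (\<subseteq>) (\<lambda>C. p ` C) (\<lambda>A B C. C \<inter> (p -` B \<inter> topspace E)) x y \<longleftrightarrow> x \<subseteq> y"
proof -
  have "inj_on p y" "y \<subseteq> topspace E"
    using assms unfolding local_section_def by (auto dest: openin_subset)
  then show ?thesis unfolding presheaf_le_def inj_on_def by blast
qed

lemma presheaf_compact_open_sections:
  assumes et: "etale_space E p X" and hX: "Hausdorff_space X"
  shows "presheaf (\<subseteq>) {A. compact_open X A} {C. compact_open E C \<and> local_section E p C}
           (\<lambda>C. p ` C) (\<lambda>A B C. C \<inter> (p -` B \<inter> topspace E))"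
  unfolding presheaf_def
proof (intro conjI ballI impI)
  interpret ring_of_sets "topspace X" "{A. compact_open X A}"
    using ring_of_sets_compact_open[OF hX] .
  show "meet_semilattice (\<subseteq>) {A. compact_open X A}" by (rule meet_semilattice_subset)
  fix C assume C: "C \<in> {C. compact_open E C \<and> local_section E p C}"
  then have CE: "C \<subseteq> topspace E"
    unfolding compact_open_def by (blast dest: openin_subset)
  show "p ` C \<in> {A. compact_open X A}"
    using C etale_space_compact_open_image[OF et] by blast
  show "C \<inter> (p -` (p ` C) \<inter> topspace E) = C" using CE by blast
  fix e f assume f: "f \<in> {A. compact_open X A}" "f \<subseteq> e \<and> p ` C = e"
  then show "C \<inter> (p -` f \<inter> topspace E) \<in> {C. compact_open E C \<and> local_section E p C}"
    using C compact_open_section_restrict[OF hX etale_space_continuous_map[OF et]] by auto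
  show "p ` (C \<inter> (p -` f \<inter> topspace E)) = f"
    using f image_section_restrict[OF CE, where D = f] by auto
next
  fix f g C
  show "C \<inter> (p -` f \<inter> topspace E) \<inter> (p -` g \<inter> topspace E) = C \<inter> (p -` g \<inter> topspace E)"
    if "g \<subseteq> f \<and> f \<subseteq> e \<and> p ` C = e" for e
    using that by blast
qed

lemma compatible_sections_Un:
  assumes et: "etale_space E p X" and hX: "Hausdorff_space X"
    and x: "compact_open E x" "local_section E p x"
    and y: "compact_open E y" "local_section E p y"
    and xy: "presheaf_compatible (\<subseteq>) {A. compact_open X A}
               {C. compact_open E C \<and> local_section E p C}
               (\<lambda>C. p ` C) (\<lambda>A B C. C \<inter> (p -` B \<inter> topspace E)) x y"
  shows "compact_open E (x \<union> y)" "local_section E p (x \<union> y)"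
proof -
  interpret ring_of_sets "topspace X" "{A. compact_open X A}"
    using ring_of_sets_compact_open[OF hX] .
  obtain m where inf: "is_inf (presheaf_le (\<subseteq>) (\<lambda>C. p ` C) (\<lambda>A B C. C \<inter> (p -` B \<inter> topspace E)))
      {C. compact_open E C \<and> local_section E p C} x y m"
    and pm: "p ` m = binf (\<subseteq>) {A. compact_open X A} (p ` x) (p ` y)"
    using xy unfolding presheaf_compatible_def by blast
  have mx: "m \<subseteq> x" and my: "m \<subseteq> y"
    using inf unfolding is_inf_def presheaf_le_local_section_iff_subset[OF x(2)]
      presheaf_le_local_section_iff_subset[OF y(2)] by blast+
  have "p ` m = p ` x \<inter> p ` y"
    using pm binf_eq_Int etale_space_compact_open_image[OF et] x(1) y(1) by simp
  then have "inj_on p (x \<union> y)"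
    using x(2) y(2) inj_on_Un_if_agree_on_overlap[OF _ _ mx my, of p]
    unfolding local_section_def by simp
  then show "local_section E p (x \<union> y)"
    using x(2) y(2) unfolding local_section_def by (simp add: openin_Un)
  show "compact_open E (x \<union> y)"
    using x(1) y(1) unfolding compact_open_def by (simp add: compactin_Un openin_Un)
qed

lemma compatible_sections_is_sup_Un:
  assumes et: "etale_space E p X" and hX: "Hausdorff_space X"
    and x: "x \<in> {C. compact_open E C \<and> local_section E p C}"
    and y: "y \<in> {C. compact_open E C \<and> local_section E p C}"
    and xy: "presheaf_compatible (\<subseteq>) {A. compact_open X A}
               {C. compact_open E C \<and> local_section E p C}
               (\<lambda>C. p ` C) (\<lambda>A B C. C \<inter> (p -` B \<inter> topspace E)) x y"
  shows "is_sup (presheaf_le (\<subseteq>) (\<lambda>C. p ` C) (\<lambda>A B C. C \<inter> (p -` B \<inter> topspace E)))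
           {C. compact_open E C \<and> local_section E p C} x y (x \<union> y)"
proof -
  have "compact_open E (x \<union> y)" "local_section E p (x \<union> y)"
    using x y compatible_sections_Un[OF et hX _ _ _ _ xy] by auto
  then show ?thesis
    unfolding is_sup_def using presheaf_le_local_section_iff_subset by auto
qed

theorem proposition3p1:
  fixes E :: "'a topology" and X :: "'b topology" and p :: "'a \<Rightarrow> 'b"
  assumes "etale_space E p X"
    and "boolean_space X"
  shows "boolean_set (\<subseteq>) {A. compact_open X A}
           {C. compact_open E C \<and> local_section E p C}
           (\<lambda>C. p ` C)
           (\<lambda>A B C. C \<inter> (p -` B \<inter> topspace E))"
proof -
  have hX: "Hausdorff_space X" using assms(2) unfolding boolean_space_def by blast
  interpret ring_of_sets "topspace X" "{A. compact_open X A}"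
    using ring_of_sets_compact_open[OF hX] .
  let ?S = "{C. compact_open E C \<and> local_section E p C}"
  have "global_support {A. compact_open X A} ?S (\<lambda>C. p ` C)"
    using compact_open_in_section_images[OF assms]
    unfolding global_support_def section_images_def by blast
  moreover have "{} \<in> ?S"
    by (simp add: compact_open_def local_section_def)
  moreover have "presheaf_le (\<subseteq>) (\<lambda>C. p ` C) (\<lambda>A B C. C \<inter> (p -` B \<inter> topspace E)) {} C"
    if "C \<in> ?S" for C
    using that by (simp add: presheaf_le_local_section_iff_subset)
  ultimately show ?thesis
    unfolding boolean_set_def bbot_eq_empty
    using gen_boolean_algebra_subset presheaf_compact_open_sections[OF assms(1) hX]
      compatible_sections_is_sup_Un[OF assms(1) hX]
    by blast
qed

end
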